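(* If a graph $H$ has no isolated vertex, then its 2-subdivision graph $S_2(H)$ (with respect to any function $\alpha: L_H\to\mathbb{N}$) is a DPDP-graph.
   Context: Graphs are finite and may have multiple edges and loops. A leaf is a vertex of degree one; $L_H$ is the set of leaves of $H$. A set $D\subseteq V(G)$ is dominating if every vertex outside $D$ has a neighbor in $D$; $P$ is paired-dominating if it is dominating and the subgraph induced by $P$ has a perfect matching. A DPDP-graph is a graph $G$ admitting disjoint sets $D,P$ with $V(G)=D\cup P$, $D$ dominating and $P$ paired-dominating. 2-subdivision graph: for a graph $H$ with no isolated vertex and $\alpha:L_H\to\mathbb{N}=\{1,2,\dots\}$, $S_2(H)$ has vertex set $(V_H\setminus L_H)\cup\{(v,i): v\in L_H, 1\le i\le \alpha(v)\}$ together with two new vertices for each edge $e$ of $H$ ($u_e,v_e$ if $e$ joins $u\ne v$; $v_e^1,v_e^2$ if $e$ is a loop at $v$). Its edges are: the edge joining the two new vertices of each $e$; for $v\in V_H\setminus L_H$, $vv_e$ for each non-loop edge $e$ at $v$ and $vv_e^1,vv_e^2$ for each loop $e$ at $v$; for $v\in L_H$ with incident edge $e$, the edges $v_e(v,i)$, $1\le i\le\alpha(v)$. *)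

theory Defs
  imports Main
begin

text \<open>Multiple edges are distinct elements of E with the same
endpoint set.\<close>

definition multigraph :: "'v set \<Rightarrow> 'e set \<Rightarrow> ('e \<Rightarrow> 'v set) \<Rightarrow> bool" where
  "multigraph V E inc \<longleftrightarrow> finite V \<and> finite E \<and>
     (\<forall>e\<in>E. inc e \<subseteq> V \<and> (card (inc e) = 1 \<or> card (inc e) = 2))"

definition is_loop :: "('e \<Rightarrow> 'v set) \<Rightarrow> 'e \<Rightarrow> bool" where
  "is_loop inc e \<longleftrightarrow> card (inc e) = 1"

definition degree :: "'e set \<Rightarrow> ('e \<Rightarrow> 'v set) \<Rightarrow> 'v \<Rightarrow> nat" where
  "degree E inc v = card {e\<in>E. v \<in> inc e \<and> \<not> is_loop inc e}
                    + 2 * card {e\<in>E. inc e = {v}}"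

definition leaves :: "'v set \<Rightarrow> 'e set \<Rightarrow> ('e \<Rightarrow> 'v set) \<Rightarrow> 'v set" where
  "leaves V E inc = {v\<in>V. degree E inc v = 1}"

definition no_isolated :: "'v set \<Rightarrow> 'e set \<Rightarrow> ('e \<Rightarrow> 'v set) \<Rightarrow> bool" where
  "no_isolated V E inc \<longleftrightarrow> (\<forall>v\<in>V. degree E inc v \<noteq> 0)"

text \<open>Vertices of S_2(H): Orig v (v a non-leaf vertex), LeafCopy v i (the copy
(v,i) of a leaf v), Sub e v (the new vertex v_e of a non-loop edge e at its
endpoint v), LoopSub e i (the new vertices v_e^1, v_e^2 of a loop e).\<close>

datatype ('v, 'e) s2v = Orig 'v | LeafCopy 'v nat | Sub 'e 'v | LoopSub 'e nat

definition S2_verts :: "'v set \<Rightarrow> 'e set \<Rightarrow> ('e \<Rightarrow> 'v set) \<Rightarrow> ('v \<Rightarrow> nat)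
    \<Rightarrow> ('v, 'e) s2v set" where
  "S2_verts V E inc \<alpha> =
     Orig ` (V - leaves V E inc)
     \<union> {LeafCopy v i | v i. v \<in> leaves V E inc \<and> 1 \<le> i \<and> i \<le> \<alpha> v}
     \<union> {Sub e v | e v. e \<in> E \<and> \<not> is_loop inc e \<and> v \<in> inc e}
     \<union> {LoopSub e i | e i. e \<in> E \<and> is_loop inc e \<and> (i = 1 \<or> i = 2)}"

definition S2_edges :: "'v set \<Rightarrow> 'e set \<Rightarrow> ('e \<Rightarrow> 'v set) \<Rightarrow> ('v \<Rightarrow> nat)
    \<Rightarrow> ('v, 'e) s2v set set" where
  "S2_edges V E inc \<alpha> =
     {{Sub e u, Sub e w} | e u w. e \<in> E \<and> inc e = {u, w} \<and> u \<noteq> w}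
     \<union> {{LoopSub e 1, LoopSub e 2} | e. e \<in> E \<and> is_loop inc e}
     \<union> {{Orig v, Sub e v} | v e. v \<in> V - leaves V E inc \<and> e \<in> E
                              \<and> \<not> is_loop inc e \<and> v \<in> inc e}
     \<union> {{Orig v, LoopSub e i} | v e i. v \<in> V - leaves V E inc \<and> e \<in> E
                              \<and> inc e = {v} \<and> (i = 1 \<or> i = 2)}
     \<union> {{Sub e v, LeafCopy v i} | v e i. v \<in> leaves V E inc \<and> e \<in> E
                              \<and> v \<in> inc e \<and> 1 \<le> i \<and> i \<le> \<alpha> v}"

definition dominating :: "'a set \<Rightarrow> 'a set set \<Rightarrow> 'a set \<Rightarrow> bool" where
  "dominating VG EG D \<longleftrightarrow> D \<subseteq> VG \<and> (\<forall>x\<in>VG - D. \<exists>y\<in>D. {x, y} \<in> EG)"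

definition induced_perfect_matching :: "'a set set \<Rightarrow> 'a set \<Rightarrow> bool" where
  "induced_perfect_matching EG P \<longleftrightarrow>
     (\<exists>M. M \<subseteq> {f \<in> EG. f \<subseteq> P} \<and> (\<forall>x\<in>P. \<exists>!f. f \<in> M \<and> x \<in> f))"

definition paired_dominating :: "'a set \<Rightarrow> 'a set set \<Rightarrow> 'a set \<Rightarrow> bool" where
  "paired_dominating VG EG P \<longleftrightarrow> dominating VG EG P \<and> induced_perfect_matching EG P"

definition DPDP_graph :: "'a set \<Rightarrow> 'a set set \<Rightarrow> bool" where
  "DPDP_graph VG EG \<longleftrightarrow> (\<exists>D P. D \<inter> P = {} \<and> VG = D \<union> P \<and>
      dominating VG EG D \<and> paired_dominating VG EG P)"

end

theory Submission
  imports Defs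
begin

text \<open>Take D to be the vertices of S_2(H) that come from vertices of H (the non-leaves and
the leaf copies) and P the new vertices created on the edges. Every new vertex is adjacent
to the vertex of H it was attached to, or to a copy of it if that vertex is a leaf; every
vertex of H lies on some edge, hence is adjacent to one of its new vertices. So each of D
and P dominates the other, and the edges joining the two new vertices of each edge of H
form a perfect matching of S_2(H)[P].\<close>

lemma induced_perfect_matchingI:
  assumes "M \<subseteq> EG" and "\<Union>M = P" and "pairwise disjnt M"
  shows "induced_perfect_matching EG P"
  unfolding induced_perfect_matching_def
proof (intro exI[of _ M] conjI ballI)
  show "M \<subseteq> {f \<in> EG. f \<subseteq> P}"
    using assms(1,2) by blast
  fix x assume "x \<in> P"
  then obtain f where "f \<in> M" "x \<in> f"
    using assms(2) by blast
  moreover have "g = f" if "g \<in> M" "x \<in> g" for g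
    using assms(3) \<open>f \<in> M\<close> \<open>x \<in> f\<close> that unfolding pairwise_def disjnt_def by blast
  ultimately show "\<exists>!f. f \<in> M \<and> x \<in> f"
    by blast
qed

lemma DPDP_graphI:
  assumes "D \<inter> P = {}" and "VG = D \<union> P"
    and "\<forall>x\<in>P. \<exists>y\<in>D. {x, y} \<in> EG"
    and "\<forall>x\<in>D. \<exists>y\<in>P. {x, y} \<in> EG"
    and "induced_perfect_matching EG P"
  shows "DPDP_graph VG EG"
proof -
  have "dominating VG EG D" "dominating VG EG P"
    using assms(1-4) unfolding dominating_def by blast+
  then show ?thesis
    unfolding DPDP_graph_def paired_dominating_def using assms(1,2,5) by blast
qed

lemma loop_iff_singleton: "is_loop inc e \<and> v \<in> inc e \<longleftrightarrow> inc e = {v}"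
  unfolding is_loop_def One_nat_def card_1_singleton_iff by auto

lemma nonloop_edge_other_end:
  assumes "multigraph V E inc" "e \<in> E" "\<not> is_loop inc e" "v \<in> inc e"
  obtains w where "w \<noteq> v" "inc e = {v, w}" "v \<in> V"
proof -
  have "card (inc e) = 2" "inc e \<subseteq> V"
    using assms(1-3) unfolding multigraph_def is_loop_def by auto
  then obtain a b where ab: "inc e = {a, b}" "a \<noteq> b"
    by (meson card_2_iff)
  then have "inc e = {v, b} \<and> b \<noteq> v \<or> inc e = {v, a} \<and> a \<noteq> v"
    using assms(4) by (auto simp: insert_commute)
  then show ?thesis
    using that assms(4) \<open>inc e \<subseteq> V\<close> by blast
qed

lemma non_isolated_has_edge:
  assumes "degree E inc v \<noteq> 0"
  obtains e where "e \<in> E" "v \<in> inc e"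
proof -
  have "{e\<in>E. v \<in> inc e \<and> \<not> is_loop inc e} \<noteq> {} \<or> {e\<in>E. inc e = {v}} \<noteq> {}"
    using assms unfolding degree_def by (metis card.empty mult_0_right add_0)
  then show ?thesis
    using that by blast
qed

lemma leaf_has_nonloop_edge:
  assumes "v \<in> leaves V E inc"
  obtains e where "e \<in> E" "\<not> is_loop inc e" "v \<in> inc e"
proof -
  have "degree E inc v = 1"
    using assms unfolding leaves_def by simp
  then have "card {e\<in>E. v \<in> inc e \<and> \<not> is_loop inc e} = 1"
    unfolding degree_def by presburger
  then show ?thesis
    using that by (metis (no_types, lifting) card_1_singletonE mem_Collect_eq singletonI)
qed

lemma loop_vertex_not_leaf:
  assumes "finite E" "e \<in> E" "inc e = {v}"
  shows "v \<notin> leaves V E inc"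
proof -
  have "card {e\<in>E. inc e = {v}} \<noteq> 0"
    using assms by (subst card_0_eq) auto
  then show ?thesis
    unfolding leaves_def degree_def by auto
qed

lemma Orig_in_S2_verts [simp]:
  "Orig v \<in> S2_verts V E inc \<alpha> \<longleftrightarrow> v \<in> V \<and> v \<notin> leaves V E inc"
  unfolding S2_verts_def by auto

lemma LeafCopy_in_S2_verts [simp]:
  "LeafCopy v i \<in> S2_verts V E inc \<alpha> \<longleftrightarrow> v \<in> leaves V E inc \<and> 1 \<le> i \<and> i \<le> \<alpha> v"
  unfolding S2_verts_def by auto

lemma Sub_in_S2_verts [simp]:
  "Sub e v \<in> S2_verts V E inc \<alpha> \<longleftrightarrow> e \<in> E \<and> \<not> is_loop inc e \<and> v \<in> inc e"
  unfolding S2_verts_def by auto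

lemma LoopSub_in_S2_verts [simp]:
  "LoopSub e i \<in> S2_verts V E inc \<alpha> \<longleftrightarrow> e \<in> E \<and> is_loop inc e \<and> (i = 1 \<or> i = 2)"
  unfolding S2_verts_def by auto

lemma Sub_Sub_in_S2_edges:
  "e \<in> E \<Longrightarrow> inc e = {u, w} \<Longrightarrow> u \<noteq> w \<Longrightarrow> {Sub e u, Sub e w} \<in> S2_edges V E inc \<alpha>"
  unfolding S2_edges_def by (intro UnI1) blast

lemma LoopSub_LoopSub_in_S2_edges:
  "e \<in> E \<Longrightarrow> is_loop inc e \<Longrightarrow> {LoopSub e 1, LoopSub e 2} \<in> S2_edges V E inc \<alpha>"
  unfolding S2_edges_def by (rule UnI1, rule UnI1, rule UnI1, rule UnI2) blast

lemma Sub_Orig_in_S2_edges: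
  "v \<in> V - leaves V E inc \<Longrightarrow> e \<in> E \<Longrightarrow> \<not> is_loop inc e \<Longrightarrow> v \<in> inc e
    \<Longrightarrow> {Sub e v, Orig v} \<in> S2_edges V E inc \<alpha>"
  unfolding S2_edges_def insert_commute[of "Sub e v"] by (rule UnI1, rule UnI1, rule UnI2) blast

lemma LoopSub_Orig_in_S2_edges:
  "v \<in> V - leaves V E inc \<Longrightarrow> e \<in> E \<Longrightarrow> inc e = {v} \<Longrightarrow> i = 1 \<or> i = 2
    \<Longrightarrow> {LoopSub e i, Orig v} \<in> S2_edges V E inc \<alpha>"
  unfolding S2_edges_def insert_commute[of "LoopSub e i"] by (rule UnI1, rule UnI2) blast

lemma Sub_LeafCopy_in_S2_edges:
  "v \<in> leaves V E inc \<Longrightarrow> e \<in> E \<Longrightarrow> v \<in> inc e \<Longrightarrow> 1 \<le> i \<Longrightarrow> i \<le> \<alpha> v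
    \<Longrightarrow> {Sub e v, LeafCopy v i} \<in> S2_edges V E inc \<alpha>"
  unfolding S2_edges_def by (rule UnI2) blast

fun subdivision_vertex :: "('v, 'e) s2v \<Rightarrow> bool" where
  "subdivision_vertex (Sub _ _) = True"
| "subdivision_vertex (LoopSub _ _) = True"
| "subdivision_vertex (Orig _) = False"
| "subdivision_vertex (LeafCopy _ _) = False"

definition subdivision_edge :: "('e \<Rightarrow> 'v set) \<Rightarrow> 'e \<Rightarrow> ('v, 'e) s2v set" where
  "subdivision_edge inc e =
     (if is_loop inc e then {LoopSub e 1, LoopSub e 2} else Sub e ` inc e)"

lemma subdivision_edge_in_S2_edges:
  assumes "multigraph V E inc" "e \<in> E"
  shows "subdivision_edge inc e \<in> S2_edges V E inc \<alpha>"
proof (cases "is_loop inc e")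
  case True
  then show ?thesis
    using assms(2) LoopSub_LoopSub_in_S2_edges by (simp only: subdivision_edge_def if_True)
next
  case False
  obtain u where "u \<in> inc e"
    using assms False unfolding multigraph_def is_loop_def by fastforce
  then obtain w where "w \<noteq> u" "inc e = {u, w}"
    using nonloop_edge_other_end[OF assms False] by blast
  then show ?thesis
    using assms(2) False by (simp add: subdivision_edge_def Sub_Sub_in_S2_edges)
qed

lemma Union_subdivision_edges:
  "\<Union>(subdivision_edge inc ` E) = {x \<in> S2_verts V E inc \<alpha>. subdivision_vertex x}"
proof (intro equalityI subsetI)
  fix x assume "x \<in> {x \<in> S2_verts V E inc \<alpha>. subdivision_vertex x}"
  then show "x \<in> \<Union>(subdivision_edge inc ` E)"
    by (cases x) (auto simp: subdivision_edge_def)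
qed (auto simp: subdivision_edge_def split: if_splits)

lemma pairwise_disjnt_subdivision_edges:
  "pairwise disjnt (subdivision_edge inc ` E)"
  unfolding pairwise_def disjnt_def subdivision_edge_def by (auto split: if_splits)

lemma subdivision_vertex_has_branch_neighbour:
  assumes "multigraph V E inc" "\<forall>v\<in>leaves V E inc. \<alpha> v \<ge> 1"
    and "x \<in> S2_verts V E inc \<alpha>" "subdivision_vertex x"
  shows "\<exists>y \<in> S2_verts V E inc \<alpha>. \<not> subdivision_vertex y \<and> {x, y} \<in> S2_edges V E inc \<alpha>"
proof (cases x)
  case (Sub e v)
  then have e: "e \<in> E" "\<not> is_loop inc e" "v \<in> inc e"
    using assms(3) by auto
  show ?thesis
  proof (cases "v \<in> leaves V E inc")
    case True
    then show ?thesis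
      using Sub e assms(2) Sub_LeafCopy_in_S2_edges[OF True e(1,3), of 1]
      by (intro bexI[of _ "LeafCopy v 1"]) auto
  next
    case False
    have "v \<in> V"
      using nonloop_edge_other_end[OF assms(1) e] by blast
    then show ?thesis
      using Sub e False Sub_Orig_in_S2_edges[of v V E inc e]
      by (intro bexI[of _ "Orig v"]) auto
  qed
next
  case (LoopSub e i)
  then have e: "e \<in> E" "is_loop inc e" "i = 1 \<or> i = 2"
    using assms(3) by auto
  then obtain v where v: "inc e = {v}"
    unfolding is_loop_def by (metis card_1_singletonE)
  have "v \<in> V" "v \<notin> leaves V E inc"
    using assms(1) e(1) v loop_vertex_not_leaf[of E e inc v V]
    unfolding multigraph_def by auto
  then show ?thesis
    using LoopSub e v LoopSub_Orig_in_S2_edges[of v V E inc e i]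
    by (intro bexI[of _ "Orig v"]) auto
qed (use assms(4) in auto)

lemma branch_vertex_has_subdivision_neighbour:
  assumes "no_isolated V E inc"
    and "x \<in> S2_verts V E inc \<alpha>" "\<not> subdivision_vertex x"
  shows "\<exists>y \<in> S2_verts V E inc \<alpha>. subdivision_vertex y \<and> {x, y} \<in> S2_edges V E inc \<alpha>"
proof (cases x)
  case (Orig v)
  then have v: "v \<in> V - leaves V E inc"
    using assms(2) by simp
  then have "degree E inc v \<noteq> 0"
    using assms(1) unfolding no_isolated_def by blast
  then obtain e where e: "e \<in> E" "v \<in> inc e"
    by (rule non_isolated_has_edge)
  show ?thesis
  proof (cases "is_loop inc e")
    case True
    have "inc e = {v}"
      using True e(2) loop_iff_singleton[of inc e v] by simp
    then have "{LoopSub e 1, x} \<in> S2_edges V E inc \<alpha>"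
      unfolding Orig by (rule LoopSub_Orig_in_S2_edges[OF v e(1)]) simp
    then show ?thesis
      using True e(1) by (intro bexI[of _ "LoopSub e 1"]) (simp_all add: insert_commute)
  next
    case False
    then have "{Sub e v, x} \<in> S2_edges V E inc \<alpha>"
      unfolding Orig by (rule Sub_Orig_in_S2_edges[OF v e(1) _ e(2)])
    then show ?thesis
      using False e by (intro bexI[of _ "Sub e v"]) (simp_all add: insert_commute)
  qed
next
  case (LeafCopy v i)
  then have v: "v \<in> leaves V E inc" "1 \<le> i" "i \<le> \<alpha> v"
    using assms(2) by simp_all
  obtain e where e: "e \<in> E" "\<not> is_loop inc e" "v \<in> inc e"
    by (rule leaf_has_nonloop_edge[OF v(1)])
  have "{Sub e v, x} \<in> S2_edges V E inc \<alpha>"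
    unfolding LeafCopy by (rule Sub_LeafCopy_in_S2_edges) (use v e in simp_all)
  then show ?thesis
    using e by (intro bexI[of _ "Sub e v"]) (simp_all add: insert_commute)
qed (use assms(3) in simp_all)

theorem proposition4p4:
  fixes V :: "'v set" and E :: "'e set" and inc :: "'e \<Rightarrow> 'v set" and \<alpha> :: "'v \<Rightarrow> nat"
  assumes "multigraph V E inc"
    and "no_isolated V E inc"
    and "\<forall>v\<in>leaves V E inc. \<alpha> v \<ge> 1"
  shows "DPDP_graph (S2_verts V E inc \<alpha>) (S2_edges V E inc \<alpha>)"
proof (rule DPDP_graphI)
  let ?P = "{x \<in> S2_verts V E inc \<alpha>. subdivision_vertex x}"
  let ?D = "{x \<in> S2_verts V E inc \<alpha>. \<not> subdivision_vertex x}"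
  show "induced_perfect_matching (S2_edges V E inc \<alpha>) ?P"
    using subdivision_edge_in_S2_edges[OF assms(1)]
    by (intro induced_perfect_matchingI[OF _ Union_subdivision_edges
          pairwise_disjnt_subdivision_edges]) blast
  show "\<forall>x\<in>?P. \<exists>y\<in>?D. {x, y} \<in> S2_edges V E inc \<alpha>"
    using subdivision_vertex_has_branch_neighbour[OF assms(1,3)] by blast
  show "\<forall>x\<in>?D. \<exists>y\<in>?P. {x, y} \<in> S2_edges V E inc \<alpha>"
    using branch_vertex_has_subdivision_neighbour[OF assms(2)] by blast
qed auto

end
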